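(* Let $\approx$ be an equivalence relation on $\mathbb W$ satisfying: for all $A,B\in\mathbb W$, $A\approx B$ iff $A\setminus B\approx B\setminus A$. Let $A,B,A',B'\in\mathbb W$ with $B\subseteq A$, $B'\subseteq A'$ and $B\approx B'$. Then $A\setminus B\approx A'\setminus B'$ if and only if $A\approx A'$.
   Context: Let $\mathbb N=\{0,1,2,\dots\}$. $\mathbb{W}$ is the family of finitary point sets: sets $A\subseteq\bigcup_{k\ge1}\mathbb N^k$ of finite tuples of natural numbers such that for every $n\in\mathbb N$ there is $h$ with $A\cap\{0,\dots,n\}^k=\emptyset$ for all $k>h$. *)

theory Defs
  imports Main
begin

text \<open>Finite tuples of naturals of length k \<ge> 1 are represented as nonempty lists.
  The set of tuples in {0..n}^k is the set of lists of length k with all entries \<le> n.\<close>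

definition cube :: "nat \<Rightarrow> nat \<Rightarrow> nat list set" where
  "cube n k = {x. length x = k \<and> set x \<subseteq> {0..n}}"

definition finitary :: "nat list set set" where
  "finitary = {A. (\<forall>x\<in>A. x \<noteq> []) \<and>
                  (\<forall>n. \<exists>h. \<forall>k>h. A \<inter> cube n k = {})}"

end

theory Submission
  imports Defs
begin

text \<open>Identify a pair of sets \<open>(X, Y)\<close> with the signed indicator \<open>1\<^sub>X - 1\<^sub>Y\<close>, which is
  all that the relation sees. For \<open>A = D \<union> B\<close> and \<open>A' = D' \<union> B'\<close> (disjoint unions) the indicator of
  \<open>(A, A')\<close> is the sum of those of \<open>(D, D')\<close> and \<open>(B, B')\<close>. One finds sets \<open>P, Q, R\<close> with
  \<open>(P, Q)\<close>, \<open>(Q, R)\<close> and \<open>(P, R)\<close> carrying the indicators of \<open>(B, B')\<close>, \<open>(D, D')\<close> and \<open>(A, A')\<close>;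
  then \<open>P \<approx> Q\<close> and transitivity give \<open>Q \<approx> R \<longleftrightarrow> P \<approx> R\<close>.\<close>

lemma finitary_subset: "A \<in> finitary \<Longrightarrow> X \<subseteq> A \<Longrightarrow> X \<in> finitary"
  unfolding finitary_def by (simp add: subset_iff) (metis disjoint_iff)

lemma finitary_Un:
  assumes "A \<in> finitary" "B \<in> finitary"
  shows "A \<union> B \<in> finitary"
proof -
  have "\<exists>h. \<forall>k>h. (A \<union> B) \<inter> cube n k = {}" for n
  proof -
    obtain h1 where "\<forall>k>h1. A \<inter> cube n k = {}"
      using assms(1) unfolding finitary_def by blast
    moreover obtain h2 where "\<forall>k>h2. B \<inter> cube n k = {}"
      using assms(2) unfolding finitary_def by blast
    ultimately have "\<forall>k>max h1 h2. (A \<union> B) \<inter> cube n k = {}" by auto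
    then show ?thesis by blast
  qed
  with assms show ?thesis unfolding finitary_def by auto
qed

locale diff_invariant_equiv =
  fixes S :: "'a set set" and r :: "('a set \<times> 'a set) set"
  assumes equiv: "equiv S r"
    and subset_closed: "X \<in> S \<Longrightarrow> Y \<subseteq> X \<Longrightarrow> Y \<in> S"
    and Un_closed: "X \<in> S \<Longrightarrow> Y \<in> S \<Longrightarrow> X \<union> Y \<in> S"
    and rel_iff_diffs: "X \<in> S \<Longrightarrow> Y \<in> S \<Longrightarrow> (X, Y) \<in> r \<longleftrightarrow> (X - Y, Y - X) \<in> r"
begin

lemma rel_cong_diffs:
  assumes "X \<in> S" "Y \<in> S" "X' \<in> S" "Y' \<in> S"
    and "X - Y = X' - Y'" "Y - X = Y' - X'"
  shows "(X, Y) \<in> r \<longleftrightarrow> (X', Y') \<in> r"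
  using rel_iff_diffs[OF assms(1,2)] rel_iff_diffs[OF assms(3,4)] assms(5,6) by simp

lemma rel_right_iff_of_rel:
  assumes "(P, Q) \<in> r"
  shows "(P, R) \<in> r \<longleftrightarrow> (Q, R) \<in> r"
  using equiv assms unfolding equiv_def sym_def trans_def by blast

lemma rel_disjoint_Un_iff:
  assumes S: "X \<in> S" "Y \<in> S" "Z \<in> S" "W \<in> S"
    and disj: "X \<inter> Z = {}" "Y \<inter> W = {}"
    and "(Z, W) \<in> r"
  shows "(X \<union> Z, Y \<union> W) \<in> r \<longleftrightarrow> (X, Y) \<in> r"
proof -
  \<comment> \<open>\<open>Q\<close> is the least set for which \<open>1\<^sub>Q + (1\<^sub>Z - 1\<^sub>W)\<close> and \<open>1\<^sub>Q - (1\<^sub>X - 1\<^sub>Y)\<close> are again indicators\<close>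
  define Q where "Q = (W - Z) \<union> (X - Y)"
  define P where "P = (Q - W) \<union> (Z - W)"
  define R where "R = (Q - X) \<union> (Y - X)"
  have U: "X \<union> Y \<union> Z \<union> W \<in> S"
    using S by (intro Un_closed)
  have PQR: "P \<in> S" "Q \<in> S" "R \<in> S"
    unfolding P_def Q_def R_def by (auto intro: subset_closed[OF U])
  have "P - Q = Z - W" "Q - P = W - Z"
    using disj unfolding P_def Q_def by auto
  then have PQ: "(P, Q) \<in> r"
    using rel_cong_diffs[of Z W P Q] S PQR \<open>(Z, W) \<in> r\<close> by simp
  have "Q - R = X - Y" "R - Q = Y - X"
    using disj unfolding Q_def R_def by auto
  then have QR: "(Q, R) \<in> r \<longleftrightarrow> (X, Y) \<in> r"
    using rel_cong_diffs[of Q R X Y] S PQR by simp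
  have "P - R = (X \<union> Z) - (Y \<union> W)" "R - P = (Y \<union> W) - (X \<union> Z)"
    using disj unfolding P_def Q_def R_def by auto
  then have PR: "(P, R) \<in> r \<longleftrightarrow> (X \<union> Z, Y \<union> W) \<in> r"
    using rel_cong_diffs[of P R "X \<union> Z" "Y \<union> W"] S PQR Un_closed by simp
  show ?thesis
    using rel_right_iff_of_rel[OF PQ] QR PR by simp
qed
end

theorem lemma1p6:
  fixes r :: "(nat list set \<times> nat list set) set"
  assumes "equiv finitary r"
    and "\<forall>A\<in>finitary. \<forall>B\<in>finitary. (A, B) \<in> r \<longleftrightarrow> (A - B, B - A) \<in> r"
    and "A \<in> finitary" "B \<in> finitary" "A' \<in> finitary" "B' \<in> finitary"
    and "B \<subseteq> A" "B' \<subseteq> A'" "(B, B') \<in> r"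
  shows "(A - B, A' - B') \<in> r \<longleftrightarrow> (A, A') \<in> r"
proof -
  interpret diff_invariant_equiv finitary r
    using assms(1,2) finitary_subset finitary_Un by unfold_locales blast+
  have "(A - B \<union> B, A' - B' \<union> B') \<in> r \<longleftrightarrow> (A - B, A' - B') \<in> r"
    using assms(3-9) by (intro rel_disjoint_Un_iff) (auto intro: finitary_subset)
  moreover have "A - B \<union> B = A" "A' - B' \<union> B' = A'"
    using assms(7,8) by auto
  ultimately show ?thesis by simp
qed

end
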